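(* Let $q$ be odd, let $C_1,C_2$ be linear codes of length $n$ over $\mathbb{F}_q$, let $C=\{[\mathbf{u}+\mathbf{v},\mathbf{u}-\mathbf{v}] : \mathbf{u}\in C_1,\mathbf{v}\in C_2\}\subseteq\mathbb{F}_q^{2n}$, and let $1\le b\le n$. Then: (a) $d_b(C)\ge\min\{2d_b(C_1),\,d_b(C_2)\}$; (b) $d_b(C)\ge\min\{d_b(C_1),\,2d_b(C_2)\}$; (c) $\min\{d_b(C_1),d_b(C_2)\}\le d_b(C)\le\min\{2d_b(C_1),\,2d_b(C_2)\}$; (d) if there exist $\mathbf{x}\in C_1\cap C_2$ and a hole $H\in\mathbb{H}(\chi_1(\mathbf{x}))$ such that $w_b(\mathbf{x})=\min\{d_b(C_1),d_b(C_2)\}$, $|H|\ge b-1$, and $\{1,n\}\cap H\ne\emptyset$, then $d_b(C)=\min\{d_b(C_1),d_b(C_2)\}$.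
   Context: For $\mathbf{x}\in\mathbb{F}_q^L$ and $1\le b\le L$, $\chi_b(\mathbf{x})=\{i\in\{1,\dots,L\}:(x_i,\dots,x_{i+b-1})\ne\mathbf{0}\}$ with indices mod $L$, $w_b(\mathbf{x})=|\chi_b(\mathbf{x})|$, and for a linear code $C$, $d_b(C)=\min_{\mathbf{0}\ne\mathbf{c}\in C}w_b(\mathbf{c})$; $\chi_1$ is the Hamming support. For $J\subseteq\mathbb{Z}_n=\{1,\dots,n\}$, a hole of $J$ of size $h\ge1$ is a set $\{a+1,\dots,a+h\}\subseteq\mathbb{Z}_n\setminus J$ (indices mod $n$) with $a,a+h+1\in J$; $\mathbb{H}(J)$ is the set of holes of $J$. *)

theory Defs
  imports Main
begin

text \<open>Vectors in F_q^L are lists of length L, positions indexed 0..L-1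
  (paper index i corresponds to list index i-1); indices are taken mod L.\<close>

definition nonzero_vec :: "'a::zero list \<Rightarrow> bool" where
  "nonzero_vec x \<longleftrightarrow> (\<exists>i<length x. x ! i \<noteq> 0)"

definition chi :: "nat \<Rightarrow> 'a::zero list \<Rightarrow> nat set" where
  "chi b x = {i. i < length x \<and> (\<exists>j<b. x ! ((i + j) mod length x) \<noteq> 0)}"

definition wb :: "nat \<Rightarrow> 'a::zero list \<Rightarrow> nat" where
  "wb b x = card (chi b x)"

definition db :: "nat \<Rightarrow> 'a::zero list set \<Rightarrow> nat" where
  "db b C = Min {wb b c | c. c \<in> C \<and> nonzero_vec c}"

definition linear_code :: "nat \<Rightarrow> 'a::field list set \<Rightarrow> bool" where
  "linear_code n C \<longleftrightarrow> C \<subseteq> {x. length x = n} \<and> replicate n 0 \<in> C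
     \<and> (\<forall>x\<in>C. \<forall>y\<in>C. map2 (+) x y \<in> C)
     \<and> (\<forall>c. \<forall>x\<in>C. map ((*) c) x \<in> C)"

definition holes :: "nat \<Rightarrow> nat set \<Rightarrow> nat set set" where
  "holes n J = {H. \<exists>a h. h \<ge> 1 \<and> a < n \<and> a \<in> J \<and> (a + h + 1) mod n \<in> J
       \<and> H = {(a + k) mod n | k. 1 \<le> k \<and> k \<le> h} \<and> H \<inter> J = {}}"

definition uuv :: "'a::field list set \<Rightarrow> 'a list set \<Rightarrow> 'a list set" where
  "uuv C1 C2 = {map2 (+) u v @ map2 (-) u v | u v. u \<in> C1 \<and> v \<in> C2}"

end

theory Submission
  imports Defs
begin

text \<open>Write \<open>w = (u + v | u - v)\<close>. If \<open>v = 0\<close> then \<open>w = (u | u)\<close>, whose \<open>w\<^sub>b\<close>-weight is exactly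
  twice that of \<open>u\<close>; symmetrically \<open>w = (v | -v)\<close> when \<open>u = 0\<close>. These words also give the
  upper bounds. If \<open>u, v \<noteq> 0\<close> then, as 2 is invertible, every position in the support of \<open>u\<close>
  or \<open>v\<close> lies in the support of \<open>u + v\<close> or \<open>u - v\<close>, so \<open>\<chi>\<^sub>b(u)\<close> and \<open>\<chi>\<^sub>b(v)\<close> lie in
  \<open>\<chi>\<^sub>b(u + v) \<union> \<chi>\<^sub>b(u - v)\<close>, which is covered by the image of \<open>\<chi>\<^sub>b(w)\<close> under \<open>i \<mapsto> i mod n\<close>.
  For (d), a common codeword \<open>x\<close> yields \<open>w = (x | 0)\<close> with \<open>u = v = x/2\<close>. A hole of size at
  least \<open>b - 1\<close> through the wrap-around point keeps every window of length \<open>b\<close> from meeting the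
  support of \<open>x\<close> in both halves of \<open>w\<close>, so \<open>i \<mapsto> i mod n\<close> is injective on \<open>\<chi>\<^sub>b(w)\<close> and
  \<open>w\<^sub>b(w) \<le> w\<^sub>b(x)\<close>.\<close>

lemma even_card_involution_without_fixpoints:
  assumes "finite A" "\<And>x. x \<in> A \<Longrightarrow> f x \<in> A" "\<And>x. f (f x) = x" "\<And>x. f x \<noteq> x"
  shows "even (card A)"
  using assms(1,2)
proof (induction A rule: finite_psubset_induct)
  case (psubset A)
  show ?case
  proof (cases "A = {}")
    case False
    then obtain x where x: "x \<in> A"
      by blast
    let ?B = "A - {x, f x}"
    have "even (card ?B)"
    proof (rule psubset.IH)
      show "?B \<subset> A"
        using x by blast
      show "f y \<in> ?B" if "y \<in> ?B" for y
        using that psubset.prems by (auto simp: assms(3) dest: arg_cong[where f = f])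
    qed
    moreover have "{x, f x} \<subseteq> A" "card {x, f x} = 2"
      using x psubset.prems assms(4)[of x] by auto
    then have "card A = card ?B + 2"
      using psubset.hyps card_mono[of A "{x, f x}"] by (simp add: card_Diff_subset)
    ultimately show ?thesis
      by simp
  qed simp
qed

lemma two_neq_zero_if_odd_card:
  assumes "odd (card (UNIV :: 'a::{field,finite} set))"
  shows "(2::'a) \<noteq> 0"
proof
  assume "(2::'a) = 0"
  then have "x + 1 + 1 = x" for x :: 'a
    by (metis add.assoc add_0_right one_add_one)
  then have "even (card (UNIV :: 'a set))"
    by (intro even_card_involution_without_fixpoints[where f = "\<lambda>x. x + 1"]) auto
  then show False
    using assms by simp
qed

lemma mod_double_modulus:
  "{m mod (2 * n), (m + n) mod (2 * n)} = {m mod n, m mod n + n :: nat}"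
proof (cases "n = 0")
  case False
  have "m mod (2 * n) = m mod n + n * (m div n mod 2)"
    using mod_mult2_eq[of m n 2] by (simp add: mult.commute)
  moreover have "(m + n) mod (2 * n) = m mod n + n * ((m div n + 1) mod 2)"
    using mod_mult2_eq[of "m + n" n 2] False by (simp add: mult.commute div_add_self2)
  moreover have "m div n mod 2 = 0 \<and> (m div n + 1) mod 2 = 1
      \<or> m div n mod 2 = 1 \<and> (m div n + 1) mod 2 = 0"
    by (auto simp: mod_Suc)
  ultimately show ?thesis
    by auto
qed simp

lemma chi_subset: "chi b x \<subseteq> {..<length x}"
  unfolding chi_def by auto

lemma finite_chi [simp]: "finite (chi b x)"
  using chi_subset finite_subset by blast

lemma wb_le_length: "wb b x \<le> length x"
  unfolding wb_def using card_mono[OF _ chi_subset] by fastforce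

lemma chi_1: "chi 1 x = {k. k < length x \<and> x ! k \<noteq> 0}"
  by (auto simp: chi_def)

lemma nonzero_vec_iff: "nonzero_vec x \<longleftrightarrow> (\<exists>t\<in>set x. t \<noteq> 0)"
  unfolding nonzero_vec_def by (metis in_set_conv_nth)

lemma nonzero_vec_append: "nonzero_vec (x @ y) \<longleftrightarrow> nonzero_vec x \<or> nonzero_vec y"
  by (auto simp: nonzero_vec_iff)

lemma not_nonzero_vec_iff: "\<not> nonzero_vec x \<longleftrightarrow> x = replicate (length x) 0"
  by (metis nonzero_vec_iff in_set_replicate replicate_length_same)

lemma finite_wb_image:
  assumes "C \<subseteq> {x. length x = L}"
  shows "finite {wb b c | c. c \<in> C \<and> nonzero_vec c}"
  by (rule finite_subset[of _ "{..L}"]) (use assms wb_le_length in fastforce)+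

lemma db_le_wb:
  assumes "C \<subseteq> {x. length x = L}" "c \<in> C" "nonzero_vec c"
  shows "db b C \<le> wb b c"
  unfolding db_def using finite_wb_image[OF assms(1)] assms(2,3) by (auto intro: Min_le)

lemma db_attained:
  assumes "C \<subseteq> {x. length x = L}" "\<exists>c\<in>C. nonzero_vec c"
  obtains c where "c \<in> C" "nonzero_vec c" "wb b c = db b C"
proof -
  have "db b C \<in> {wb b c | c. c \<in> C \<and> nonzero_vec c}"
    unfolding db_def using finite_wb_image[OF assms(1)] assms(2) by (intro Min_in) auto
  then show ?thesis using that by auto
qed

lemma chi_subset_Un:
  assumes "length y = length x" "length z = length x"
    and "\<And>k. k < length x \<Longrightarrow> x ! k \<noteq> 0 \<Longrightarrow> y ! k \<noteq> 0 \<or> z ! k \<noteq> 0"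
  shows "chi b x \<subseteq> chi b y \<union> chi b z"
proof
  fix i assume "i \<in> chi b x"
  then obtain j where "i < length x" "j < b" "x ! ((i + j) mod length x) \<noteq> 0"
    unfolding chi_def by auto
  moreover have "(i + j) mod length x < length x"
    using \<open>i < length x\<close> by (intro mod_less_divisor) linarith
  ultimately show "i \<in> chi b y \<union> chi b z"
    using assms unfolding chi_def by fastforce
qed

lemma chi_append_same_support:
  assumes "length y = length x" and "\<And>k. k < length x \<Longrightarrow> y ! k = 0 \<longleftrightarrow> x ! k = 0"
  shows "chi b (x @ y) = {i. i < 2 * length x \<and> i mod length x \<in> chi b x}"
proof -
  let ?n = "length x"
  have zero_iff: "(x @ y) ! m = 0 \<longleftrightarrow> x ! (m mod ?n) = 0" if "m < 2 * ?n" for m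
  proof (cases "m < ?n")
    case False
    then have "m mod ?n = m - ?n"
      using that by (simp add: le_mod_geq)
    then show ?thesis
      using assms that False by (simp add: nth_append)
  qed (simp add: nth_append)
  have shift: "(x @ y) ! ((i + j) mod (2 * ?n)) = 0 \<longleftrightarrow> x ! ((i mod ?n + j) mod ?n) = 0"
    if "i < 2 * ?n" for i j
  proof -
    have "(i + j) mod (2 * ?n) < 2 * ?n"
      using that by (intro mod_less_divisor) linarith
    moreover have "(i + j) mod (2 * ?n) mod ?n = (i mod ?n + j) mod ?n"
      by (simp add: mod_mod_cancel mod_add_left_eq)
    ultimately show ?thesis
      using zero_iff by simp
  qed
  show ?thesis
  proof (intro set_eqI)
    fix i
    have "i \<in> chi b (x @ y) \<longleftrightarrow> i < 2 * ?n \<and> (\<exists>j<b. (x @ y) ! ((i + j) mod (2 * ?n)) \<noteq> 0)"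
      unfolding chi_def using assms(1) by (simp add: mult_2)
    also have "\<dots> \<longleftrightarrow> i < 2 * ?n \<and> (\<exists>j<b. x ! ((i mod ?n + j) mod ?n) \<noteq> 0)"
      using shift by blast
    also have "\<dots> \<longleftrightarrow> i < 2 * ?n \<and> i mod ?n \<in> chi b x"
      unfolding chi_def by (auto intro: mod_less_divisor)
    finally show "i \<in> chi b (x @ y) \<longleftrightarrow> i \<in> {i. i < 2 * ?n \<and> i mod ?n \<in> chi b x}"
      by simp
  qed
qed

lemma card_mod_preimage_double:
  assumes "S \<subseteq> {..<n::nat}"
  shows "card {i. i < 2 * n \<and> i mod n \<in> S} = 2 * card S"
proof -
  have "{i. i < 2 * n \<and> i mod n \<in> S} = S \<union> (+) n ` S"
  proof (intro set_eqI iffI)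
    fix i assume i: "i \<in> {i. i < 2 * n \<and> i mod n \<in> S}"
    show "i \<in> S \<union> (+) n ` S"
    proof (cases "i < n")
      case False
      have "i - n < n"
        using i by auto
      then have "i = n + i mod n"
        using False by (simp add: le_mod_geq)
      then show ?thesis
        using i by blast
    qed (use i in simp)
  qed (use assms in auto)
  moreover have "S \<inter> (+) n ` S = {}"
    using assms by auto
  moreover have "finite S"
    using assms finite_subset by blast
  ultimately show ?thesis
    by (simp add: card_Un_disjoint card_image)
qed

lemma wb_append_same_support:
  assumes "length y = length x" and "\<And>k. k < length x \<Longrightarrow> y ! k = 0 \<longleftrightarrow> x ! k = 0"
  shows "wb b (x @ y) = 2 * wb b x"
proof -
  have "chi b (x @ y) = {i. i < 2 * length x \<and> i mod length x \<in> chi b x}"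
    by (rule chi_append_same_support) (use assms in auto)
  then show ?thesis
    unfolding wb_def using card_mod_preimage_double[OF chi_subset[of b x]] by simp
qed

lemma card_chi_Un_le_wb_append:
  assumes "length y = length x"
  shows "card (chi b x \<union> chi b y) \<le> wb b (x @ y)"
proof -
  let ?n = "length x"
  have "chi b x \<union> chi b y \<subseteq> (\<lambda>m. m mod ?n) ` chi b (x @ y)"
  proof
    fix i assume "i \<in> chi b x \<union> chi b y"
    then obtain j where i: "i < ?n" "j < b"
      and nz: "x ! ((i + j) mod ?n) \<noteq> 0 \<or> y ! ((i + j) mod ?n) \<noteq> 0"
      using assms unfolding chi_def by auto
    have "(i + j) mod ?n < ?n"
      using i(1) by (intro mod_less_divisor) linarith
    then have "\<exists>q \<in> {(i + j) mod ?n, (i + j) mod ?n + ?n}. (x @ y) ! q \<noteq> 0"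
      using nz assms by (auto simp: nth_append)
    moreover have "{(i + j) mod (2 * ?n), (i + ?n + j) mod (2 * ?n)}
        = {(i + j) mod ?n, (i + j) mod ?n + ?n}"
      using mod_double_modulus[of "i + j" ?n] by (simp add: ac_simps)
    ultimately have "\<exists>q \<in> {(i + j) mod (2 * ?n), (i + ?n + j) mod (2 * ?n)}. (x @ y) ! q \<noteq> 0"
      by (simp only:)
    then obtain m where m: "m \<in> {i, i + ?n}" "(x @ y) ! ((m + j) mod (2 * ?n)) \<noteq> 0"
      by auto
    then have "m \<in> chi b (x @ y)"
      unfolding chi_def using i assms by (auto simp: mult_2)
    moreover have "i = m mod ?n"
      using m(1) i(1) by auto
    ultimately show "i \<in> (\<lambda>m. m mod ?n) ` chi b (x @ y)"
      by (rule rev_image_eqI)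
  qed
  then show ?thesis
    unfolding wb_def by (meson card_image_le card_mono finite_chi finite_imageI order_trans)
qed

text \<open>The hole lies in the cyclic gap from \<open>p\<close> through \<open>n - 1\<close> and \<open>0\<close> to \<open>r\<close>.\<close>

lemma card_hole_le:
  assumes "H \<in> holes n J" and "{0, n - 1} \<inter> H \<noteq> {}"
    and "p \<in> J" "p < n" "r \<in> J" "r < n"
  shows "card H + p + 1 \<le> n + r"
proof -
  obtain a h where "1 \<le> h" "a < n"
    and H: "H = {(a + k) mod n | k. 1 \<le> k \<and> k \<le> h}" and "H \<inter> J = {}"
    using assms(1) unfolding holes_def by blast
  have not_J: "(a + k) mod n \<notin> J" if "1 \<le> k" "k \<le> h" for k
    using H \<open>H \<inter> J = {}\<close> that by blast
  have "H = (\<lambda>k. (a + k) mod n) ` {1..h}"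
    unfolding H by auto
  then have "card H \<le> h"
    using card_image_le[of "{1..h}" "\<lambda>k. (a + k) mod n"] by simp
  have "n \<le> a + h + 1"
  proof (rule ccontr)
    assume "\<not> n \<le> a + h + 1"
    then have "(a + k) mod n = a + k" if "k \<le> h" for k
      using that by simp
    then have "H \<subseteq> {1..n - 2}"
      unfolding H using \<open>\<not> n \<le> a + h + 1\<close> by force
    moreover have "0 \<notin> {1..n - 2}" "n - 1 \<notin> {1..n - 2}"
      using \<open>a < n\<close> by auto
    ultimately show False
      using assms(2) by blast
  qed
  have "p \<le> a"
  proof (rule ccontr)
    assume "\<not> p \<le> a"
    then have "(a + (p - a)) mod n \<in> J"
      using assms(3,4) by simp
    then show False
      using not_J[of "p - a"] \<open>\<not> p \<le> a\<close> \<open>p < n\<close> \<open>n \<le> a + h + 1\<close> by linarith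
  qed
  moreover have "a + h < n + r"
  proof (rule ccontr)
    assume "\<not> a + h < n + r"
    have "(a + (n + r - a)) mod n \<in> J"
      using assms(5,6) \<open>a < n\<close> by simp
    then show False
      using not_J[of "n + r - a"] \<open>\<not> a + h < n + r\<close> \<open>a < n\<close> by linarith
  qed
  ultimately show ?thesis
    using \<open>card H \<le> h\<close> by linarith
qed

lemma nth_append_zeros_nonzero:
  assumes "length x = n" "(x @ replicate n 0) ! m \<noteq> 0" "m < 2 * n"
  shows "m < n" "x ! m \<noteq> 0"
  using assms by (auto simp: nth_append split: if_splits)

lemma mod_image_chi_append_zeros:
  assumes "length x = n"
  shows "(\<lambda>i. i mod n) ` chi b (x @ replicate n 0) \<subseteq> chi b x"
proof
  fix i' assume "i' \<in> (\<lambda>i. i mod n) ` chi b (x @ replicate n 0)"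
  then obtain i j where i': "i' = i mod n" and "i < 2 * n" "j < b"
    and nz: "(x @ replicate n 0) ! ((i + j) mod (2 * n)) \<noteq> 0"
    unfolding chi_def using assms by (auto simp: mult_2)
  have "(i + j) mod (2 * n) < 2 * n"
    using \<open>i < 2 * n\<close> by (intro mod_less_divisor) linarith
  then have m: "(i + j) mod (2 * n) < n" "x ! ((i + j) mod (2 * n)) \<noteq> 0"
    using nth_append_zeros_nonzero[OF assms nz] by auto
  have "(i' + j) mod n = (i + j) mod (2 * n) mod n"
    unfolding i' by (simp add: mod_mod_cancel mod_add_left_eq)
  also have "\<dots> = (i + j) mod (2 * n)"
    using m(1) by simp
  finally show "i' \<in> chi b x"
    unfolding chi_def using m \<open>j < b\<close> \<open>i < 2 * n\<close> assms i' by auto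
qed

text \<open>Otherwise the windows at \<open>i\<close> and at \<open>i + n\<close> both meet the support of \<open>x\<close>, the second one
  after wrapping around, and fewer than \<open>b - 1\<close> zeros of \<open>x\<close> around the wrap-around point
  remain between them.\<close>

lemma chi_append_zeros_not_both:
  assumes "length x = n" "b \<le> n"
    and H: "H \<in> holes n (chi 1 x)" "b - 1 \<le> card H" "{0, n - 1} \<inter> H \<noteq> {}"
    and "i < n" "i \<in> chi b (x @ replicate n 0)"
  shows "i + n \<notin> chi b (x @ replicate n 0)"
proof
  let ?w = "x @ replicate n 0"
  assume "i + n \<in> chi b ?w"
  then obtain j' where "j' < b" and nz': "?w ! ((i + n + j') mod (2 * n)) \<noteq> 0"
    unfolding chi_def using assms(1) by (auto simp: mult_2)
  obtain j where "j < b" and nz: "?w ! ((i + j) mod (2 * n)) \<noteq> 0"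
    using assms(1,7) unfolding chi_def by (auto simp: mult_2)
  have "i + j < 2 * n"
    using assms(2,6) \<open>j < b\<close> by linarith
  then have p: "i + j < n" "x ! (i + j) \<noteq> 0"
    using nth_append_zeros_nonzero[OF assms(1)] nz by auto
  have "2 * n \<le> i + n + j'"
  proof (rule ccontr)
    assume "\<not> 2 * n \<le> i + n + j'"
    then show False
      using nth_append_zeros_nonzero(1)[OF assms(1), of "i + n + j'"] nz' by simp
  qed
  then have "(i + n + j') mod (2 * n) = i + j' - n"
    using assms(2,6) \<open>j' < b\<close> by (simp add: le_mod_geq)
  then have r: "i + j' - n < n" "x ! (i + j' - n) \<noteq> 0"
    using nth_append_zeros_nonzero[OF assms(1), of "i + j' - n"] nz' assms(2,6) \<open>j' < b\<close>
    by auto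
  have "i + j \<in> chi 1 x" "i + j' - n \<in> chi 1 x"
    using p r assms(1) unfolding chi_1 by auto
  then have "card H + (i + j) + 1 \<le> n + (i + j' - n)"
    using card_hole_le[OF H(1) H(3)] p(1) r(1) by blast
  then show False
    using \<open>2 * n \<le> i + n + j'\<close> \<open>j' < b\<close> H(2) by linarith
qed

lemma wb_append_zeros_le:
  assumes "length x = n" "b \<le> n"
    and H: "H \<in> holes n (chi 1 x)" "b - 1 \<le> card H" "{0, n - 1} \<inter> H \<noteq> {}"
  shows "wb b (x @ replicate n 0) \<le> wb b x"
proof -
  let ?w = "x @ replicate n 0"
  have "inj_on (\<lambda>i. i mod n) (chi b ?w)"
  proof (rule linorder_inj_onI')
    fix i k assume i: "i \<in> chi b ?w" and k: "k \<in> chi b ?w" and "i < k"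
    show "i mod n \<noteq> k mod n"
    proof
      assume "i mod n = k mod n"
      then obtain c where c: "k - i = n * c"
        using \<open>i < k\<close> mod_eq_dvd_iff_nat[of i k n] by (auto elim: dvdE)
      have "k < 2 * n"
        using k chi_subset[of b ?w] assms(1) by auto
      then have "n * c < n * 2"
        using c \<open>i < k\<close> by linarith
      moreover have "c \<noteq> 0"
        using c \<open>i < k\<close> by (intro notI) simp
      ultimately have "c = 1"
        by simp
      then have "k = i + n" "i < n"
        using c \<open>i < k\<close> \<open>k < 2 * n\<close> by auto
      then show False
        using chi_append_zeros_not_both[OF assms \<open>i < n\<close> i] k by simp
    qed
  qed
  then show ?thesis
    unfolding wb_def using card_inj_on_le[OF _ mod_image_chi_append_zeros[OF assms(1)]] by simp
qed

lemma add_diff_eq_zero_iff: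
  assumes "(2::'a::field) \<noteq> 0"
  shows "x + y = 0 \<and> x - y = 0 \<longleftrightarrow> x = 0 \<and> y = (0::'a)"
proof -
  have "x = 0" if "x + y = 0" "x - y = 0"
  proof -
    have "y = x"
      using that(2) by simp
    have "2 * x = x + y"
      unfolding \<open>y = x\<close> by (rule mult_2)
    then have "2 * x = 0"
      using that(1) by simp
    then show ?thesis
      using assms by simp
  qed
  then show ?thesis
    by auto
qed

lemma linear_codeD:
  assumes "linear_code n C"
  shows "C \<subseteq> {x. length x = n}" "replicate n 0 \<in> C" "x \<in> C \<Longrightarrow> map ((*) c) x \<in> C"
  using assms unfolding linear_code_def by blast+

lemma uuvI: "u \<in> C1 \<Longrightarrow> v \<in> C2 \<Longrightarrow> map2 (+) u v @ map2 (-) u v \<in> uuv C1 C2"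
  unfolding uuv_def by blast

lemma uuv_subset_length:
  assumes "linear_code n C1" "linear_code n C2"
  shows "uuv C1 C2 \<subseteq> {x. length x = 2 * n}"
  using linear_codeD(1)[OF assms(1)] linear_codeD(1)[OF assms(2)]
  unfolding uuv_def by (auto simp: subset_iff)

lemma map2_replicate_zero:
  fixes x :: "'a::ab_group_add list"
  shows "map2 (+) x (replicate (length x) 0) = x"
    and "map2 (-) x (replicate (length x) 0) = x"
    and "map2 (+) (replicate (length x) 0) x = x"
    and "map2 (-) (replicate (length x) 0) x = map uminus x"
  by (induction x) auto

lemma append_self_in_uuv:
  assumes "linear_code n C2" "u \<in> C1" "length u = n"
  shows "u @ u \<in> uuv C1 C2"
  using uuvI[OF assms(2) linear_codeD(2)[OF assms(1)]] map2_replicate_zero[of u] assms(3)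
  by simp

lemma append_uminus_in_uuv:
  assumes "linear_code n C1" "v \<in> C2" "length v = n"
  shows "v @ map uminus v \<in> uuv C1 C2"
  using uuvI[OF linear_codeD(2)[OF assms(1)] assms(2)] map2_replicate_zero[of v] assms(3)
  by simp

lemma exists_nonzero_uuv:
  assumes "linear_code n C1" "linear_code n C2" "\<exists>c\<in>C1. nonzero_vec c"
  shows "\<exists>w\<in>uuv C1 C2. nonzero_vec w"
proof -
  obtain u where "u \<in> C1" "nonzero_vec u"
    using assms(3) by blast
  moreover have "u @ u \<in> uuv C1 C2"
    using append_self_in_uuv[OF assms(2) \<open>u \<in> C1\<close>] linear_codeD(1)[OF assms(1)] \<open>u \<in> C1\<close>
    by auto
  ultimately show ?thesis
    by (intro bexI[of _ "u @ u"]) (simp_all add: nonzero_vec_append)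
qed

lemma db_uuv_le_double:
  assumes "linear_code n C1" "linear_code n C2"
    and "\<exists>c\<in>C1. nonzero_vec c" "\<exists>c\<in>C2. nonzero_vec c"
  shows "db b (uuv C1 C2) \<le> min (2 * db b C1) (2 * db b C2)"
proof -
  note uuv_len = uuv_subset_length[OF assms(1,2)]
  obtain u where u: "u \<in> C1" "nonzero_vec u" "wb b u = db b C1"
    using db_attained[OF linear_codeD(1)[OF assms(1)] assms(3)] by blast
  obtain v where v: "v \<in> C2" "nonzero_vec v" "wb b v = db b C2"
    using db_attained[OF linear_codeD(1)[OF assms(2)] assms(4)] by blast
  have "db b (uuv C1 C2) \<le> wb b (u @ u)"
    using db_le_wb[OF uuv_len append_self_in_uuv[OF assms(2) u(1)]] u(1,2)
      linear_codeD(1)[OF assms(1)] by (auto simp: nonzero_vec_append)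
  also have "\<dots> = 2 * db b C1"
    using wb_append_same_support[of u u] u(3) by simp
  finally have "db b (uuv C1 C2) \<le> 2 * db b C1" .
  moreover have "db b (uuv C1 C2) \<le> wb b (v @ map uminus v)"
    using db_le_wb[OF uuv_len append_uminus_in_uuv[OF assms(1) v(1)]] v(1,2)
      linear_codeD(1)[OF assms(2)] by (auto simp: nonzero_vec_append)
  moreover have "wb b (v @ map uminus v) = 2 * db b C2"
    using wb_append_same_support[of "map uminus v" v] v(3) by simp
  ultimately show ?thesis
    by simp
qed

lemma wb_le_wb_sum_diff:
  fixes u v :: "'a::field list"
  assumes "(2::'a) \<noteq> 0" "length v = length u"
  shows "wb b u \<le> wb b (map2 (+) u v @ map2 (-) u v)"
    and "wb b v \<le> wb b (map2 (+) u v @ map2 (-) u v)"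
proof -
  let ?a = "map2 (+) u v" and ?c = "map2 (-) u v"
  have "?a ! k \<noteq> 0 \<or> ?c ! k \<noteq> 0" if "k < length u" "u ! k \<noteq> 0 \<or> v ! k \<noteq> 0" for k
    using that add_diff_eq_zero_iff[OF assms(1), of "u ! k" "v ! k"] assms(2) by auto
  then have "chi b u \<subseteq> chi b ?a \<union> chi b ?c" "chi b v \<subseteq> chi b ?a \<union> chi b ?c"
    by (intro chi_subset_Un; use assms(2) in simp)+
  then have "wb b u \<le> card (chi b ?a \<union> chi b ?c)" "wb b v \<le> card (chi b ?a \<union> chi b ?c)"
    unfolding wb_def by (simp_all add: card_mono)
  moreover have "card (chi b ?a \<union> chi b ?c) \<le> wb b (?a @ ?c)"
    by (rule card_chi_Un_le_wb_append) simp
  ultimately show "wb b u \<le> wb b (?a @ ?c)" "wb b v \<le> wb b (?a @ ?c)"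
    by simp_all
qed

lemma wb_uuv_ge:
  fixes C1 C2 :: "'a::field list set"
  assumes "(2::'a) \<noteq> 0" "linear_code n C1" "linear_code n C2" "u \<in> C1" "v \<in> C2"
    and nz: "nonzero_vec (map2 (+) u v @ map2 (-) u v)"
  shows "min (2 * db b C1) (db b C2) \<le> wb b (map2 (+) u v @ map2 (-) u v)
    \<and> min (db b C1) (2 * db b C2) \<le> wb b (map2 (+) u v @ map2 (-) u v)"
proof -
  let ?a = "map2 (+) u v" and ?c = "map2 (-) u v"
  have lu: "length u = n" and lv: "length v = n"
    using assms(2-5) linear_codeD(1) by blast+
  have d1: "db b C1 \<le> wb b u" if "nonzero_vec u"
    using db_le_wb[OF linear_codeD(1)[OF assms(2)] assms(4) that] .
  have d2: "db b C2 \<le> wb b v" if "nonzero_vec v"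
    using db_le_wb[OF linear_codeD(1)[OF assms(3)] assms(5) that] .
  consider "\<not> nonzero_vec v" | "\<not> nonzero_vec u" | "nonzero_vec u" "nonzero_vec v"
    by blast
  then show ?thesis
  proof cases
    case 1
    then have "?a @ ?c = u @ u"
      using map2_replicate_zero(1,2)[of u] not_nonzero_vec_iff[of v] lu lv by simp
    moreover have "nonzero_vec u"
      using nz calculation by (simp add: nonzero_vec_append)
    ultimately show ?thesis
      using wb_append_same_support[of u u] d1 by (auto simp: min_def)
  next
    case 2
    then have "?a @ ?c = v @ map uminus v"
      using map2_replicate_zero(3,4)[of v] not_nonzero_vec_iff[of u] lu lv by simp
    moreover have "nonzero_vec v"
      using nz calculation by (auto simp: nonzero_vec_append nonzero_vec_iff)
    ultimately show ?thesis
      using wb_append_same_support[of "map uminus v" v] d2 by (auto simp: min_def)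
  next
    case 3
    then show ?thesis
      using wb_le_wb_sum_diff[OF assms(1), of v u b] d1 d2 lu lv by fastforce
  qed
qed

lemma db_uuv_ge:
  fixes C1 C2 :: "'a::field list set"
  assumes "(2::'a) \<noteq> 0" "linear_code n C1" "linear_code n C2" "\<exists>c\<in>C1. nonzero_vec c"
  shows "min (2 * db b C1) (db b C2) \<le> db b (uuv C1 C2)
    \<and> min (db b C1) (2 * db b C2) \<le> db b (uuv C1 C2)"
proof -
  obtain w where w: "w \<in> uuv C1 C2" "nonzero_vec w" "wb b w = db b (uuv C1 C2)"
    using db_attained[OF uuv_subset_length[OF assms(2,3)] exists_nonzero_uuv[OF assms(2-4)]]
    by blast
  then obtain u v where "u \<in> C1" "v \<in> C2" "w = map2 (+) u v @ map2 (-) u v"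
    unfolding uuv_def by blast
  then show ?thesis
    using wb_uuv_ge[OF assms(1-3)] w by metis
qed

lemma db_uuv_le_common_codeword:
  fixes C1 C2 :: "'a::field list set"
  assumes "(2::'a) \<noteq> 0" "linear_code n C1" "linear_code n C2" "x \<in> C1" "x \<in> C2" "b \<le> n"
    and H: "H \<in> holes n (chi 1 x)" "b - 1 \<le> card H" "{0, n - 1} \<inter> H \<noteq> {}"
  shows "db b (uuv C1 C2) \<le> wb b x"
proof -
  let ?h = "map ((*) (inverse 2)) x"
  have lx: "length x = n"
    using assms(2,4) linear_codeD(1) by blast
  have "map2 (+) ?h ?h @ map2 (-) ?h ?h = x @ replicate n 0"
    using assms(1) lx by (simp add: list_eq_iff_nth_eq nth_append field_simps)
  moreover have "map2 (+) ?h ?h @ map2 (-) ?h ?h \<in> uuv C1 C2"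
    using assms(2-5) by (intro uuvI linear_codeD(3))
  moreover have "nonzero_vec x"
    using H(1) lx unfolding holes_def chi_1 nonzero_vec_def by blast
  ultimately have "db b (uuv C1 C2) \<le> wb b (x @ replicate n 0)"
    using db_le_wb[OF uuv_subset_length[OF assms(2,3)]] by (simp add: nonzero_vec_append)
  also have "\<dots> \<le> wb b x"
    by (rule wb_append_zeros_le[OF lx assms(6) H])
  finally show ?thesis .
qed

theorem mainTheorem11:
  fixes C1 C2 :: "'a::{field,finite} list set" and n b :: nat
  assumes "odd (card (UNIV :: 'a set))"
    and "linear_code n C1" and "linear_code n C2"
    and "\<exists>c\<in>C1. nonzero_vec c" and "\<exists>c\<in>C2. nonzero_vec c"
    and "1 \<le> b" and "b \<le> n"
  shows "db b (uuv C1 C2) \<ge> min (2 * db b C1) (db b C2)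
    \<and> db b (uuv C1 C2) \<ge> min (db b C1) (2 * db b C2)
    \<and> min (db b C1) (db b C2) \<le> db b (uuv C1 C2)
    \<and> db b (uuv C1 C2) \<le> min (2 * db b C1) (2 * db b C2)
    \<and> ((\<exists>x \<in> C1 \<inter> C2. \<exists>H \<in> holes n (chi 1 x).
           wb b x = min (db b C1) (db b C2) \<and> card H \<ge> b - 1
           \<and> {0, n - 1} \<inter> H \<noteq> {})
        \<longrightarrow> db b (uuv C1 C2) = min (db b C1) (db b C2))"
proof -
  have two: "(2::'a) \<noteq> 0"
    using assms(1) by (rule two_neq_zero_if_odd_card)
  have lower: "min (2 * db b C1) (db b C2) \<le> db b (uuv C1 C2)"
    "min (db b C1) (2 * db b C2) \<le> db b (uuv C1 C2)"
    using db_uuv_ge[OF two assms(2,3,4)] by blast+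
  then have min_le: "min (db b C1) (db b C2) \<le> db b (uuv C1 C2)"
    by linarith
  have upper: "db b (uuv C1 C2) \<le> min (2 * db b C1) (2 * db b C2)"
    by (rule db_uuv_le_double[OF assms(2-5)])
  have "db b (uuv C1 C2) = min (db b C1) (db b C2)"
    if "x \<in> C1 \<inter> C2" "H \<in> holes n (chi 1 x)" "wb b x = min (db b C1) (db b C2)"
      "b - 1 \<le> card H" "{0, n - 1} \<inter> H \<noteq> {}" for x H
  proof -
    have "db b (uuv C1 C2) \<le> wb b x"
      using db_uuv_le_common_codeword[OF two assms(2,3) _ _ assms(7) that(2,4,5)] that(1) by blast
    then show ?thesis
      using that(3) min_le by linarith
  qed
  then show ?thesis
    using lower min_le upper by blast
qed

end
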